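(* Let $i\in\arg\max_x w^{\text{avg}}_x$. There exists $\rho_0>0$ such that for every $\rho\in(0,\rho_0]$, $$\Delta=\mathcal{W}(D_{\text{mask}})-\mathcal{W}(D_{\text{fair}})\ \ge\ \rho\cdot\max\Big(0,\ \max_{j\ne i,\ p\in\{0,1\}}\big\{R_p(j)-w^{\text{avg}}_i\big\}\Big),$$ where $R_p(j)=\dfrac{w_{i,\bar p}+w_{j,p}}{\Pr(P=\bar p\mid x_i)+\Pr(P=p\mid x_j)}$ with $\bar p=1-p$. (In particular, for such $\rho$ the optimal fair value is $\mathcal{W}(D_{\text{fair}})=\rho\, w^{\text{avg}}_i$.)
   Context: Fix an integer $k\ge 2$, $X\in\{1,\dots,k\}$, $P\in\{0,1\}$, $\pi_{x,p}=\Pr(X=x,P=p)>0$ with $\sum_{x,p}\pi_{x,p}=1$, $\Pr(X=x)=\pi_{x,0}+\pi_{x,1}$, $\Pr(P=p\mid x)=\pi_{x,p}/\Pr(X=x)$; write $x_i$ for the event $X=i$. Rewards $\gamma_{x,p}\in[0,1]$. Define $w_{x,p}=\gamma_{x,p}\Pr(P=p\mid x)$ and $w^{\text{avg}}_x=w_{x,0}+w_{x,1}$. Policies are $\alpha\in[0,1]^{2k}$ with objective $\mathcal{W}(\alpha)=\sum_{x,p}\gamma_{x,p}\alpha_{x,p}\pi_{x,p}$ and participation constraint $\sum_{x,p}\alpha_{x,p}\pi_{x,p}=\rho$. $\mathcal{W}(D_{\text{fair}})$ is the optimal value of maximizing $\mathcal{W}$ over $\alpha\in[0,1]^{2k}$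 subject to the participation constraint and $\alpha_{x,1}=\alpha_{x,0}$ for all $x$. $\mathcal{W}(D_{\text{mask}})$ is the optimal value of maximizing $\mathcal{W}$ over $\alpha\in[0,1]^{2k}$ subject to the participation constraint and the zero-ATE (masking) constraint $\sum_{x=1}^k\Pr(X=x)(\alpha_{x,1}-\alpha_{x,0})=0$. *)

theory Defs
  imports Complex_Main
begin

text \<open>Covariate values x range over {1..k}; protected attribute p over {0,1}.
  pr x p = Pr(X=x, P=p), gam x p = reward, alpha x p = policy.\<close>

definition PrX :: "(nat \<Rightarrow> nat \<Rightarrow> real) \<Rightarrow> nat \<Rightarrow> real" where
  "PrX pr x = pr x 0 + pr x 1"

definition PrP :: "(nat \<Rightarrow> nat \<Rightarrow> real) \<Rightarrow> nat \<Rightarrow> nat \<Rightarrow> real" where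
  "PrP pr x p = pr x p / PrX pr x"

definition wt :: "(nat \<Rightarrow> nat \<Rightarrow> real) \<Rightarrow> (nat \<Rightarrow> nat \<Rightarrow> real) \<Rightarrow> nat \<Rightarrow> nat \<Rightarrow> real" where
  "wt pr gam x p = gam x p * PrP pr x p"

definition wavg :: "(nat \<Rightarrow> nat \<Rightarrow> real) \<Rightarrow> (nat \<Rightarrow> nat \<Rightarrow> real) \<Rightarrow> nat \<Rightarrow> real" where
  "wavg pr gam x = wt pr gam x 0 + wt pr gam x 1"

definition Wobj :: "nat \<Rightarrow> (nat \<Rightarrow> nat \<Rightarrow> real) \<Rightarrow> (nat \<Rightarrow> nat \<Rightarrow> real) \<Rightarrow> (nat \<Rightarrow> nat \<Rightarrow> real) \<Rightarrow> real" where
  "Wobj k pr gam alpha = (\<Sum>x\<in>{1..k}. \<Sum>p\<in>{0,1}. gam x p * alpha x p * pr x p)"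

definition policy :: "nat \<Rightarrow> (nat \<Rightarrow> nat \<Rightarrow> real) \<Rightarrow> bool" where
  "policy k alpha = (\<forall>x\<in>{1..k}. \<forall>p\<in>{0,1::nat}. 0 \<le> alpha x p \<and> alpha x p \<le> 1)"

definition participation :: "nat \<Rightarrow> (nat \<Rightarrow> nat \<Rightarrow> real) \<Rightarrow> real \<Rightarrow> (nat \<Rightarrow> nat \<Rightarrow> real) \<Rightarrow> bool" where
  "participation k pr \<rho> alpha = ((\<Sum>x\<in>{1..k}. \<Sum>p\<in>{0,1}. alpha x p * pr x p) = \<rho>)"

definition W_fair :: "nat \<Rightarrow> (nat \<Rightarrow> nat \<Rightarrow> real) \<Rightarrow> (nat \<Rightarrow> nat \<Rightarrow> real) \<Rightarrow> real \<Rightarrow> real" where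
  "W_fair k pr gam \<rho> = Sup {Wobj k pr gam alpha | alpha. policy k alpha \<and> participation k pr \<rho> alpha
      \<and> (\<forall>x\<in>{1..k}. alpha x 1 = alpha x 0)}"

definition W_mask :: "nat \<Rightarrow> (nat \<Rightarrow> nat \<Rightarrow> real) \<Rightarrow> (nat \<Rightarrow> nat \<Rightarrow> real) \<Rightarrow> real \<Rightarrow> real" where
  "W_mask k pr gam \<rho> = Sup {Wobj k pr gam alpha | alpha. policy k alpha \<and> participation k pr \<rho> alpha
      \<and> (\<Sum>x\<in>{1..k}. PrX pr x * (alpha x 1 - alpha x 0)) = 0}"

definition Rratio :: "(nat \<Rightarrow> nat \<Rightarrow> real) \<Rightarrow> (nat \<Rightarrow> nat \<Rightarrow> real) \<Rightarrow> nat \<Rightarrow> nat \<Rightarrow> nat \<Rightarrow> real" where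
  "Rratio pr gam i p j = (wt pr gam i (1 - p) + wt pr gam j p) / (PrP pr i (1 - p) + PrP pr j p)"

end

theory Submission
  imports Defs
begin

text \<open>Once \<rho> is at most the smallest cell mass Pr(X=x, P=p), the participation constraint
  already forces \<alpha> \<le> 1, so both problems only see nonnegative policies of total mass \<rho>.
  A fair policy then earns \<Sum>x. \<alpha>(x) Pr(X=x) w_avg(x) \<le> \<rho> w_avg(i), with equality when only
  stratum i is admitted. That policy has zero ATE, and so has the policy admitting the cells
  (i, 1-p) and (j, p) with the same conditional mass in both strata, which earns \<rho> R_p(j).
  Hence the masked optimum is at least \<rho> max(w_avg(i), R_p(j)).\<close>

lemma sum_eq_single_support:
  assumes "finite A" "i \<in> A" "\<And>x. x \<in> A \<Longrightarrow> x \<noteq> i \<Longrightarrow> f x = 0"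
  shows "sum f A = f i"
  using sum.mono_neutral_right[of A "{i}" f] assms by auto

lemma sum_eq_two_point_support:
  assumes "finite A" "i \<in> A" "j \<in> A" "i \<noteq> j"
    and "\<And>x. x \<in> A \<Longrightarrow> x \<noteq> i \<Longrightarrow> x \<noteq> j \<Longrightarrow> f x = 0"
  shows "sum f A = f i + f j"
  using sum.mono_neutral_right[of A "{i,j}" f] assms by auto

definition stratum_policy :: "nat \<Rightarrow> real \<Rightarrow> nat \<Rightarrow> nat \<Rightarrow> real" where
  "stratum_policy i c x p = (if x = i then c else 0)"

text \<open>Admits the fraction t of stratum i through cell (i, 1-q) and of stratum j through
  cell (j, q), so that the two contributions to the ATE cancel.\<close>

definition cross_policy ::
    "(nat \<Rightarrow> nat \<Rightarrow> real) \<Rightarrow> nat \<Rightarrow> nat \<Rightarrow> nat \<Rightarrow> real \<Rightarrow> nat \<Rightarrow> nat \<Rightarrow> real" where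
  "cross_policy pr i j q t x p =
     (if x = i \<and> p = 1 - q then t / PrX pr i else if x = j \<and> p = q then t / PrX pr j else 0)"

lemma participation_stratum_policy:
  assumes "i \<in> {1..k}" "PrX pr i \<noteq> 0"
  shows "participation k pr \<rho> (stratum_policy i (\<rho> / PrX pr i))"
  using assms unfolding participation_def
  by (subst sum_eq_single_support[of "{1..k}" i])
    (auto simp: stratum_policy_def PrX_def simp flip: add_divide_distrib distrib_left)

lemma Wobj_stratum_policy:
  assumes "i \<in> {1..k}"
  shows "Wobj k pr gam (stratum_policy i c) = c * (gam i 0 * pr i 0 + gam i 1 * pr i 1)"
  using assms unfolding Wobj_def
  by (subst sum_eq_single_support[of "{1..k}" i]) (auto simp: stratum_policy_def algebra_simps)

lemma ATE_cross_policy_eq_0: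
  assumes "i \<in> {1..k}" "j \<in> {1..k}" "i \<noteq> j" "q \<in> {0,1}" "PrX pr i \<noteq> 0" "PrX pr j \<noteq> 0"
  shows "(\<Sum>x\<in>{1..k}. PrX pr x * (cross_policy pr i j q t x 1 - cross_policy pr i j q t x 0)) = 0"
  using assms by (subst sum_eq_two_point_support[of "{1..k}" i j]) (auto simp: cross_policy_def)

lemma participation_cross_policy:
  assumes "i \<in> {1..k}" "j \<in> {1..k}" "i \<noteq> j" "q \<in> {0,1}"
  shows "participation k pr (t * (PrP pr i (1 - q) + PrP pr j q)) (cross_policy pr i j q t)"
  using assms unfolding participation_def
  by (subst sum_eq_two_point_support[of "{1..k}" i j])
    (auto simp: cross_policy_def PrP_def algebra_simps)

lemma Wobj_cross_policy:
  assumes "i \<in> {1..k}" "j \<in> {1..k}" "i \<noteq> j" "q \<in> {0,1}"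
  shows "Wobj k pr gam (cross_policy pr i j q t) = t * (wt pr gam i (1 - q) + wt pr gam j q)"
  using assms unfolding Wobj_def
  by (subst sum_eq_two_point_support[of "{1..k}" i j])
    (auto simp: cross_policy_def wt_def PrP_def algebra_simps)

locale full_support =
  fixes k :: nat and pr :: "nat \<Rightarrow> nat \<Rightarrow> real"
  assumes pr_pos: "\<And>x p. x \<in> {1..k} \<Longrightarrow> p \<in> {0,1} \<Longrightarrow> 0 < pr x p"
begin

lemma PrX_pos: "x \<in> {1..k} \<Longrightarrow> 0 < PrX pr x"
  using pr_pos[of x 0] pr_pos[of x 1] by (simp add: PrX_def)

lemma PrP_pos: "x \<in> {1..k} \<Longrightarrow> p \<in> {0,1} \<Longrightarrow> 0 < PrP pr x p"
  using pr_pos PrX_pos by (simp add: PrP_def)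

lemma PrX_mult_wavg:
  "x \<in> {1..k} \<Longrightarrow> PrX pr x * wavg pr gam x = gam x 0 * pr x 0 + gam x 1 * pr x 1"
  using PrX_pos[of x] by (simp add: wavg_def wt_def PrP_def field_simps)

lemma ex_lower_bound_cells:
  obtains \<rho>0 where "0 < \<rho>0" "\<And>x p. x \<in> {1..k} \<Longrightarrow> p \<in> {0,1} \<Longrightarrow> \<rho>0 \<le> pr x p"
proof
  \<comment> \<open>The element 1 only keeps the set nonempty.\<close>
  let ?C = "insert 1 (case_prod pr ` ({1..k} \<times> {0,1}))"
  show "0 < Min ?C"
    using pr_pos by (subst Min_gr_iff) auto
  show "Min ?C \<le> pr x p" if "x \<in> {1..k}" "p \<in> {0,1}" for x p
    using that by (intro Min_le) auto
qed

lemma Wobj_le_W_mask: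
  assumes "policy k alpha" "participation k pr \<rho> alpha"
    and "(\<Sum>x\<in>{1..k}. PrX pr x * (alpha x 1 - alpha x 0)) = 0"
  shows "Wobj k pr gam alpha \<le> W_mask k pr gam \<rho>"
  unfolding W_mask_def
proof (rule cSup_upper)
  have "Wobj k pr gam \<beta> \<le> (\<Sum>x\<in>{1..k}. \<Sum>p\<in>{0,1}. \<bar>gam x p\<bar> * pr x p)" if "policy k \<beta>" for \<beta>
    unfolding Wobj_def
  proof (intro sum_mono)
    fix x p assume x: "x \<in> {1..k}" and p: "p \<in> {0,1::nat}"
    have \<beta>: "0 \<le> \<beta> x p" "\<beta> x p \<le> 1"
      using that x p unfolding policy_def by auto
    have "gam x p * \<beta> x p \<le> \<bar>gam x p\<bar> * \<beta> x p"
      using \<beta> by (intro mult_right_mono) auto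
    also have "\<dots> \<le> \<bar>gam x p\<bar>"
      using \<beta> by (intro mult_left_le) auto
    finally show "gam x p * \<beta> x p * pr x p \<le> \<bar>gam x p\<bar> * pr x p"
      using pr_pos[OF x p] by (intro mult_right_mono) auto
  qed
  then show "bdd_above {Wobj k pr gam alpha | alpha. policy k alpha \<and> participation k pr \<rho> alpha
      \<and> (\<Sum>x\<in>{1..k}. PrX pr x * (alpha x 1 - alpha x 0)) = 0}"
    by (auto intro!: bdd_aboveI)
qed (use assms in blast)

lemma policy_if_participation_below_cells:
  assumes nonneg: "\<And>x p. x \<in> {1..k} \<Longrightarrow> p \<in> {0,1} \<Longrightarrow> 0 \<le> alpha x p"
    and part: "participation k pr \<rho> alpha"
    and small: "\<And>x p. x \<in> {1..k} \<Longrightarrow> p \<in> {0,1} \<Longrightarrow> \<rho> \<le> pr x p"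
  shows "policy k alpha"
  unfolding policy_def
proof (intro ballI conjI)
  fix x p assume x: "x \<in> {1..k}" and p: "p \<in> {0,1::nat}"
  show "0 \<le> alpha x p" using nonneg x p .
  have term_nonneg: "0 \<le> alpha y p' * pr y p'" if "y \<in> {1..k}" "p' \<in> {0,1::nat}" for y p'
    using nonneg[OF that] pr_pos[OF that] by simp
  have "alpha x p * pr x p \<le> (\<Sum>p'\<in>{0,1}. alpha x p' * pr x p')"
    using p term_nonneg[OF x] by (intro member_le_sum) auto
  also have "\<dots> \<le> (\<Sum>y\<in>{1..k}. \<Sum>p'\<in>{0,1}. alpha y p' * pr y p')"
    using x term_nonneg by (intro member_le_sum sum_nonneg) auto
  also have "\<dots> = \<rho>"
    using part by (simp add: participation_def)
  also have "\<dots> \<le> pr x p"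
    using small x p .
  finally show "alpha x p \<le> 1"
    using pr_pos[OF x p] by simp
qed

lemma Wobj_fair_le:
  assumes "policy k alpha" "participation k pr \<rho> alpha" "\<forall>x\<in>{1..k}. alpha x 1 = alpha x 0"
    and i_max: "\<forall>x\<in>{1..k}. wavg pr gam x \<le> wavg pr gam i"
  shows "Wobj k pr gam alpha \<le> \<rho> * wavg pr gam i"
proof -
  have "Wobj k pr gam alpha = (\<Sum>x\<in>{1..k}. alpha x 0 * (PrX pr x * wavg pr gam x))"
    unfolding Wobj_def using assms(3) by (intro sum.cong) (auto simp: PrX_mult_wavg algebra_simps)
  also have "\<dots> \<le> (\<Sum>x\<in>{1..k}. alpha x 0 * PrX pr x * wavg pr gam i)"
  proof (intro sum_mono)
    fix x assume x: "x \<in> {1..k}"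
    have "0 \<le> alpha x 0 * PrX pr x"
      using assms(1) x PrX_pos[OF x] unfolding policy_def by simp
    then show "alpha x 0 * (PrX pr x * wavg pr gam x) \<le> alpha x 0 * PrX pr x * wavg pr gam i"
      using i_max x by (simp add: mult.assoc[symmetric] mult_left_mono)
  qed
  also have "\<dots> = (\<Sum>x\<in>{1..k}. alpha x 0 * PrX pr x) * wavg pr gam i"
    by (simp add: sum_distrib_right)
  also have "(\<Sum>x\<in>{1..k}. alpha x 0 * PrX pr x) = \<rho>"
    using assms(2,3) unfolding participation_def PrX_def by (auto simp: algebra_simps intro!: sum.cong)
  finally show ?thesis .
qed

lemma stratum_policy_feasible:
  assumes i: "i \<in> {1..k}" and "0 \<le> \<rho>"
    and small: "\<And>x p. x \<in> {1..k} \<Longrightarrow> p \<in> {0,1} \<Longrightarrow> \<rho> \<le> pr x p"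
  shows "policy k (stratum_policy i (\<rho> / PrX pr i))"
    and "participation k pr \<rho> (stratum_policy i (\<rho> / PrX pr i))"
    and "Wobj k pr gam (stratum_policy i (\<rho> / PrX pr i)) = \<rho> * wavg pr gam i"
proof -
  show part: "participation k pr \<rho> (stratum_policy i (\<rho> / PrX pr i))"
    using participation_stratum_policy i PrX_pos[OF i] by simp
  show "policy k (stratum_policy i (\<rho> / PrX pr i))"
    using \<open>0 \<le> \<rho>\<close> PrX_pos[OF i]
    by (intro policy_if_participation_below_cells[OF _ part small]) (simp add: stratum_policy_def)
  show "Wobj k pr gam (stratum_policy i (\<rho> / PrX pr i)) = \<rho> * wavg pr gam i"
    using Wobj_stratum_policy[OF i] PrX_mult_wavg[OF i] PrX_pos[OF i]
    by (simp add: field_simps)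
qed

lemma W_fair_eq:
  assumes "i \<in> {1..k}" "\<forall>x\<in>{1..k}. wavg pr gam x \<le> wavg pr gam i" "0 \<le> \<rho>"
    and "\<And>x p. x \<in> {1..k} \<Longrightarrow> p \<in> {0,1} \<Longrightarrow> \<rho> \<le> pr x p"
  shows "W_fair k pr gam \<rho> = \<rho> * wavg pr gam i"
  unfolding W_fair_def
proof (rule cSup_eq_maximum)
  show "\<rho> * wavg pr gam i \<in> {Wobj k pr gam alpha | alpha. policy k alpha
      \<and> participation k pr \<rho> alpha \<and> (\<forall>x\<in>{1..k}. alpha x 1 = alpha x 0)}"
    using stratum_policy_feasible[OF assms(1,3,4)]
    by (intro CollectI exI[of _ "stratum_policy i (\<rho> / PrX pr i)"]) (simp add: stratum_policy_def)
qed (use Wobj_fair_le assms(2) in blast)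

lemma W_mask_ge_wavg:
  assumes "i \<in> {1..k}" "0 \<le> \<rho>"
    and "\<And>x p. x \<in> {1..k} \<Longrightarrow> p \<in> {0,1} \<Longrightarrow> \<rho> \<le> pr x p"
  shows "\<rho> * wavg pr gam i \<le> W_mask k pr gam \<rho>"
  using Wobj_le_W_mask[OF stratum_policy_feasible(1,2)[OF assms], where gam = gam]
    stratum_policy_feasible(3)[OF assms, of gam]
  by (simp add: stratum_policy_def)

lemma W_mask_ge_Rratio:
  assumes i: "i \<in> {1..k}" and j: "j \<in> {1..k}" "j \<noteq> i" and q: "q \<in> {0,1}" and "0 \<le> \<rho>"
    and small: "\<And>x p. x \<in> {1..k} \<Longrightarrow> p \<in> {0,1} \<Longrightarrow> \<rho> \<le> pr x p"
  shows "\<rho> * Rratio pr gam i q j \<le> W_mask k pr gam \<rho>"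
proof -
  define D where "D = PrP pr i (1 - q) + PrP pr j q"
  have "0 < D"
    unfolding D_def using PrP_pos i j q by (intro add_pos_pos) auto
  let ?\<alpha> = "cross_policy pr i j q (\<rho> / D)"
  have part: "participation k pr \<rho> ?\<alpha>"
    using participation_cross_policy[OF i j(1) j(2)[symmetric] q, of pr "\<rho> / D"] \<open>0 < D\<close>
    by (simp add: D_def)
  have "policy k ?\<alpha>"
    using \<open>0 \<le> \<rho>\<close> \<open>0 < D\<close> PrX_pos[OF i] PrX_pos[OF j(1)]
    by (intro policy_if_participation_below_cells[OF _ part small]) (simp add: cross_policy_def)
  moreover have "(\<Sum>x\<in>{1..k}. PrX pr x * (?\<alpha> x 1 - ?\<alpha> x 0)) = 0"
    using ATE_cross_policy_eq_0[OF i j(1) j(2)[symmetric] q] PrX_pos[OF i] PrX_pos[OF j(1)] by simp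
  moreover have "Wobj k pr gam ?\<alpha> = \<rho> * Rratio pr gam i q j"
    using Wobj_cross_policy[OF i j(1) j(2)[symmetric] q] by (simp add: Rratio_def D_def)
  ultimately show ?thesis
    using part Wobj_le_W_mask by metis
qed

lemma W_mask_gap:
  assumes "2 \<le> k" and i: "i \<in> {1..k}" and i_max: "\<forall>x\<in>{1..k}. wavg pr gam x \<le> wavg pr gam i"
    and "0 < \<rho>" and small: "\<And>x p. x \<in> {1..k} \<Longrightarrow> p \<in> {0,1} \<Longrightarrow> \<rho> \<le> pr x p"
  shows "\<rho> * max 0 (Max {Rratio pr gam i p j - wavg pr gam i | j p. j \<in> {1..k} - {i} \<and> p \<in> {0,1}})
      \<le> W_mask k pr gam \<rho> - W_fair k pr gam \<rho>"
proof -
  define S where "S = {Rratio pr gam i p j - wavg pr gam i | j p. j \<in> {1..k} - {i} \<and> p \<in> {0,1::nat}}"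
  have "finite S"
    unfolding S_def by (intro finite_image_set2) auto
  moreover have "(if i = 1 then 2 else 1) \<in> {1..k} - {i}"
    using \<open>2 \<le> k\<close> by auto
  then have "S \<noteq> {}"
    unfolding S_def by blast
  ultimately have "max 0 (Max S) \<in> insert 0 S"
    by (simp add: max_def)
  moreover have "\<rho> * s \<le> W_mask k pr gam \<rho> - \<rho> * wavg pr gam i" if "s \<in> insert 0 S" for s
    using that W_mask_ge_wavg[OF i] W_mask_ge_Rratio[OF i] \<open>0 < \<rho>\<close> small
    unfolding S_def by (force simp: right_diff_distrib)
  ultimately show ?thesis
    using W_fair_eq[OF i i_max] \<open>0 < \<rho>\<close> small unfolding S_def by simp
qed

end

theorem mainTheorem3:
  fixes k :: nat and pr gam :: "nat \<Rightarrow> nat \<Rightarrow> real" and i :: nat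
  assumes "k \<ge> 2"
    and "\<forall>x\<in>{1..k}. \<forall>p\<in>{0,1::nat}. pr x p > 0"
    and "(\<Sum>x\<in>{1..k}. \<Sum>p\<in>{0,1::nat}. pr x p) = 1"
    and "\<forall>x\<in>{1..k}. \<forall>p\<in>{0,1::nat}. 0 \<le> gam x p \<and> gam x p \<le> 1"
    and "i \<in> {1..k}" and "\<forall>x\<in>{1..k}. wavg pr gam x \<le> wavg pr gam i"
  shows "\<exists>\<rho>0>0. \<forall>\<rho>. 0 < \<rho> \<and> \<rho> \<le> \<rho>0 \<longrightarrow>
      W_mask k pr gam \<rho> - W_fair k pr gam \<rho> \<ge>
        \<rho> * max 0 (Max {Rratio pr gam i p j - wavg pr gam i | j p. j \<in> {1..k} - {i} \<and> p \<in> {0,1}})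
      \<and> W_fair k pr gam \<rho> = \<rho> * wavg pr gam i"
proof -
  interpret full_support k pr
    using assms(2) by unfold_locales blast
  obtain \<rho>0 where "0 < \<rho>0" and \<rho>0_le: "\<And>x p. x \<in> {1..k} \<Longrightarrow> p \<in> {0,1} \<Longrightarrow> \<rho>0 \<le> pr x p"
    using ex_lower_bound_cells by blast
  have "W_mask k pr gam \<rho> - W_fair k pr gam \<rho> \<ge>
        \<rho> * max 0 (Max {Rratio pr gam i p j - wavg pr gam i | j p. j \<in> {1..k} - {i} \<and> p \<in> {0,1}})
      \<and> W_fair k pr gam \<rho> = \<rho> * wavg pr gam i" if "0 < \<rho>" "\<rho> \<le> \<rho>0" for \<rho>
  proof -
    have small: "\<And>x p. x \<in> {1..k} \<Longrightarrow> p \<in> {0,1} \<Longrightarrow> \<rho> \<le> pr x p"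
      using \<rho>0_le that(2) by force
    show ?thesis
      using W_mask_gap[OF assms(1,5,6) that(1) small] W_fair_eq[OF assms(5,6)] that(1) small by simp
  qed
  then show ?thesis
    using \<open>0 < \<rho>0\<close> by blast
qed

end
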